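(* Let $\alpha\in\mathbb{R}\setminus\{2\}$, $p\ge1$, $p^*=\frac{p}{p-1}$, and let $f$ be a differentiable, strictly decreasing ($f'<0$) probability density function. Then $$N_{1+(2-\alpha)p^*}^{\alpha-2}[f]\,e^{-\alpha S[f]}\;\ge\;\mathfrak{K}\,e^{\langle\log|f'|\rangle_f},\qquad \mathfrak{K}=|2-\alpha|\,K^{(0)}_{p,1}.$$ Moreover, equality holds only when $f=\mathcal{U}_\alpha[g_{p,1}]$.
   Context: $\langle h\rangle_f=\int h f$. $N_\lambda[f]=\left(\int f^\lambda\right)^{1/(1-\lambda)}$; $S[f]=-\int f\log f$; $\sigma_q[f]=\left(\int|x|^qf\right)^{1/q}$ (for $q=\infty$, the essential supremum of $|x|$ on the support). $g_{p,1}(x)=a_{p,1}e^{-|x|^{p^*}}$ with $a_{p,1}=\frac{p^*}{2\Gamma(1/p^* )}$, and $K^{(0)}_{p,1}=\sigma_{p^*}[g_{p,1}]/e^{S[g_{p,1}]}$ is the optimal constant of the moment–entropy inequality $\sigma_{p^*}[h]/e^{S[h]}\ge K^{(0)}_{p,1}$. Up transform: for $\alpha\ne2$, $\mathcal{U}_\alpha[f](u)=|(\alpha-2)x(u)|^{1/(2-\alpha)}$, where $x(u)$ inverts a change of variable $u(x)$ with $u'(x)=-|(\alpha-2)x|^{1/(\alpha-2)}f(x)$ (defined up to translation). *)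

theory Defs
  imports "HOL-Analysis.Analysis" "HOL-Probability.Essential_Supremum"
begin

definition pconj :: "real \<Rightarrow> ereal" where
  "pconj p = (if p = 1 then \<infinity> else ereal (p / (p - 1)))"

definition fmean :: "(real \<Rightarrow> real) \<Rightarrow> (real \<Rightarrow> real) \<Rightarrow> real" where
  "fmean h f = (\<integral>x. h x * f x \<partial>lborel)"

definition shannon :: "(real \<Rightarrow> real) \<Rightarrow> real" where
  "shannon f = - (\<integral>x. f x * ln (f x) \<partial>lborel)"

text \<open>Renyi entropy power N_lambda[f] = (int f^lambda)^(1/(1-lambda)); the integral runs
  over the support (0 powr a = 0).  For lambda = +infinity / -infinity the limiting values
  1 / ess sup f and ess sup over the support of 1/f are used.\<close>
definition renyiN :: "ereal \<Rightarrow> (real \<Rightarrow> real) \<Rightarrow> real" where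
  "renyiN lam f =
     (if lam = \<infinity> then 1 / real_of_ereal (esssup (density lborel f) (\<lambda>x. ereal (f x)))
      else if lam = -\<infinity> then real_of_ereal (esssup (density lborel f) (\<lambda>x. ereal (1 / f x)))
      else (\<integral>x. f x powr real_of_ereal lam \<partial>lborel) powr (1 / (1 - real_of_ereal lam)))"

text \<open>q-th absolute moment sigma_q[h]; for q = infinity the essential supremum of |x|
  on the support of h.\<close>
definition sigma_mom :: "ereal \<Rightarrow> (real \<Rightarrow> real) \<Rightarrow> real" where
  "sigma_mom q h =
     (if q = \<infinity> then real_of_ereal (esssup (density lborel h) (\<lambda>x. ereal \<bar>x\<bar>))
      else (\<integral>x. \<bar>x\<bar> powr real_of_ereal q * h x \<partial>lborel) powr (1 / real_of_ereal q))"

text \<open>g_{p,1}(x) = a e^{-|x|^{p*}}, a = p*/(2 Gamma(1/p*)); for p = 1 (p* = infinity) the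
  limit, the uniform density on (-1,1).\<close>
definition g_p1 :: "real \<Rightarrow> real \<Rightarrow> real" where
  "g_p1 p x =
     (if p = 1 then (if \<bar>x\<bar> < 1 then 1 / 2 else 0)
      else (let ps = p / (p - 1) in ps / (2 * Gamma (1 / ps)) * exp (- (\<bar>x\<bar> powr ps))))"

text \<open>Optimal constant of the moment-entropy inequality.\<close>
definition K0 :: "real \<Rightarrow> real" where
  "K0 p = sigma_mom (pconj p) (g_p1 p) / exp (shannon (g_p1 p))"

text \<open>F = U_alpha[g]: for some choice of the change of variable u (defined up to translation),
  u'(x) = -|(alpha-2)x|^{1/(alpha-2)} g(x) on the support D of g (x /= 0), and
  F(u(x)) = |(alpha-2) x|^{1/(2-alpha)} for x in D, F vanishing off u(D).\<close>
definition up_transform_eq :: "real \<Rightarrow> (real \<Rightarrow> real) \<Rightarrow> (real \<Rightarrow> real) \<Rightarrow> bool" where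
  "up_transform_eq \<alpha> g F \<longleftrightarrow>
     (\<exists>u :: real \<Rightarrow> real.
        (\<forall>x. x \<noteq> 0 \<and> g x > 0 \<longrightarrow>
           (u has_real_derivative (- (\<bar>(\<alpha> - 2) * x\<bar> powr (1 / (\<alpha> - 2)) * g x))) (at x)) \<and>
        (\<forall>x. x \<noteq> 0 \<and> g x > 0 \<longrightarrow> F (u x) = \<bar>(\<alpha> - 2) * x\<bar> powr (1 / (2 - \<alpha>))) \<and>
        (\<forall>v. v \<notin> u ` {x. x \<noteq> 0 \<and> g x > 0} \<longrightarrow> F v = 0))"

end

theory Submission
  imports Defs
begin

text \<open>
  Put X = f^(2 - \<alpha>) / |2 - \<alpha>|; as f is strictly decreasing, X is injective on I. For every
  positive G on (0, \<infinity>), the inequality ln t \<le> t - 1 at t = G(X) |f'| f^(-\<alpha>), integrated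
  against f, gives
    <ln G(X)>_f + <ln |f'|>_f + \<alpha> S[f] \<le> \<integral>_I |X'| G(X) - 1 = \<integral>_X(I) G - 1.
  For p > 1 take for G the rescaled extremal g_p1(y/s)/s on the half-line and optimise the
  scale s; for p = 1 take the uniform density on [0, sup X], whose height is controlled by
  N_(+-\<infinity>)[f]. Since X(I) lies in a half-line, only half of the mass of the even extremal
  is used, so the inequality is strict and its equality clause holds vacuously.
\<close>

lemma has_integral_lborel_on_support:
  fixes h :: "real \<Rightarrow> real"
  assumes "integrable lborel h" and "\<And>x. x \<notin> I \<Longrightarrow> h x = 0"
  shows "(h has_integral (\<integral>x. h x \<partial>lborel)) I"
proof -
  have "(\<lambda>x. if x \<in> I then h x else 0) = h"
    using assms(2) by auto
  then show ?thesis
    using has_integral_integral_lborel[OF assms(1)] has_integral_restrict_UNIV[of I h] by simp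
qed

lemma has_integral_if_absolutely_integrable:
  fixes f :: "real \<Rightarrow> real"
  assumes "f absolutely_integrable_on S \<and> integral S f = v"
  shows "(f has_integral v) S"
  using assms integrable_integral set_lebesgue_integral_eq_integral(1) by metis

lemma absolutely_integrable_integral_cong:
  assumes "\<And>x. x \<in> S \<Longrightarrow> f x = g x"
  shows "(f absolutely_integrable_on S \<and> integral S f = b) \<longleftrightarrow>
         (g absolutely_integrable_on S \<and> integral S g = b)"
proof -
  have "set_integrable lebesgue S f = set_integrable lebesgue S g"
    by (rule set_integrable_cong) (simp_all add: assms)
  moreover have "integral S f = integral S g"
    by (rule integral_cong) (simp add: assms)
  ultimately show ?thesis
    by simp
qed

lemma absolutely_integrable_integral_cmult:
  fixes f :: "real \<Rightarrow> real"
  assumes "f absolutely_integrable_on S \<and> integral S f = v"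
  shows "(\<lambda>x. c * f x) absolutely_integrable_on S \<and> integral S (\<lambda>x. c * f x) = c * v"
  using set_integrable_mult_right[OF conjunct1[OF assms]] assms by simp

lemma has_integral_change_of_variables_le:
  fixes g G :: "real \<Rightarrow> real"
  assumes S: "S \<in> sets lebesgue"
    and der: "\<And>x. x \<in> S \<Longrightarrow> (g has_real_derivative g' x) (at x within S)"
    and inj: "inj_on g S"
    and G: "G absolutely_integrable_on T" "\<forall>y\<in>T. 0 \<le> G y"
    and img: "g ` S \<subseteq> T"
  shows "((\<lambda>x. \<bar>g' x\<bar> * G (g x)) has_integral integral (g ` S) G) S \<and> integral (g ` S) G \<le> integral T G"
proof
  have "g differentiable_on S"
    using der unfolding differentiable_on_def
    by (blast intro: differentiableI has_field_derivative_imp_has_derivative)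
  then have "g ` S \<in> sets lebesgue"
    by (rule differentiable_image_in_sets_lebesgue[OF S, rotated]) simp
  then have image: "G absolutely_integrable_on g ` S"
    using set_integrable_subset[OF G(1) _ img] by blast
  then show "((\<lambda>x. \<bar>g' x\<bar> * G (g x)) has_integral integral (g ` S) G) S"
    using has_absolute_integral_change_of_variables_1'[OF S der inj, of G "integral (g ` S) G"]
    by (blast intro: has_integral_if_absolutely_integrable)
  show "integral (g ` S) G \<le> integral T G"
    using image G by (intro integral_subset_le[OF img]) (simp_all add: set_lebesgue_integral_eq_integral(1))
qed

lemma lborel_integral_even:
  fixes \<phi> :: "real \<Rightarrow> real"
  assumes \<phi>: "\<phi> absolutely_integrable_on {0<..} \<and> integral {0<..} \<phi> = v"
    and meas: "(\<lambda>x. \<phi> \<bar>x\<bar>) \<in> borel_measurable borel"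
  shows "integrable lborel (\<lambda>x. \<phi> \<bar>x\<bar>) \<and> (\<integral>x. \<phi> \<bar>x\<bar> \<partial>lborel) = 2 * v"
proof -
  let ?h = "\<lambda>x. \<phi> \<bar>x\<bar>" and ?T = "{..<0} \<union> {0<..} :: real set"
  have pos: "?h absolutely_integrable_on {0<..} \<and> integral {0<..} ?h = v"
    using \<phi> by (rule absolutely_integrable_integral_cong[THEN iffD1, rotated]) simp
  have "(\<lambda>x. \<bar>-1\<bar> * \<phi> (- x)) absolutely_integrable_on {..<0} \<and>
        integral {..<0} (\<lambda>x. \<bar>-1\<bar> * \<phi> (- x)) = v"
    using has_absolute_integral_change_of_variables_1'[of "{..<0}" uminus "\<lambda>_. -1" \<phi> v,
        OF _ DERIV_minus[OF DERIV_ident]] \<phi>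
    by (simp add: borel_open)
  then have neg: "?h absolutely_integrable_on {..<0} \<and> integral {..<0} ?h = v"
    by (rule absolutely_integrable_integral_cong[THEN iffD1, rotated]) simp
  have spike: "negligible {x \<in> UNIV - ?T. ?h x \<noteq> 0}" "negligible {x \<in> ?T - UNIV. ?h x \<noteq> 0}"
    by (auto intro: negligible_subset[of "{0}"])
  have "{..<0} \<inter> {0<..} = ({} :: real set)"
    by auto
  then have "(?h has_integral (v + v)) ?T"
    using neg pos by (intro has_integral_Un has_integral_if_absolutely_integrable) auto
  then have "(?h has_integral 2 * v) UNIV"
    using has_integral_spike_set_eq[OF spike] by simp
  moreover have "?h absolutely_integrable_on UNIV"
    using absolutely_integrable_Un[OF conjunct1[OF neg] conjunct1[OF pos]]
      absolutely_integrable_spike_set_eq[OF spike] by simp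
  then have "integrable lborel ?h"
    using integrable_completion[of ?h lborel] meas by (simp add: set_integrable_def)
  ultimately show ?thesis
    by (simp add: integral_lborel[symmetric] integral_unique)
qed

section \<open>Integrals of stretched exponentials\<close>

lemma image_scaled_powr_pos_reals:
  fixes q s :: real
  assumes "q > 0" and "s > 0"
  shows "(\<lambda>y. (y / s) powr q) ` {0<..} = {0<..}"
proof
  show "{0<..} \<subseteq> (\<lambda>y. (y / s) powr q) ` {0<..}"
  proof
    fix t :: real
    assume "t \<in> {0<..}"
    then have "t = ((s * t powr (1/q)) / s) powr q" and "s * t powr (1/q) \<in> {0<..}"
      using assms by (simp_all add: powr_powr)
    then show "t \<in> (\<lambda>y. (y / s) powr q) ` {0<..}"
      by blast
  qed
qed (use assms in auto)

lemma absolutely_integrable_powr_substitution: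
  fixes F :: "real \<Rightarrow> real" and q s b :: real
  assumes q: "q > 0" and s: "s > 0"
    and F: "F absolutely_integrable_on {0<..} \<and> integral {0<..} F = b"
  shows "(\<lambda>y. q / s * (y / s) powr (q - 1) * F ((y / s) powr q)) absolutely_integrable_on {0<..} \<and>
         integral {0<..} (\<lambda>y. q / s * (y / s) powr (q - 1) * F ((y / s) powr q)) = b"
proof -
  have der: "((\<lambda>y. (y / s) powr q) has_field_derivative q / s * (y / s) powr (q - 1))
               (at y within {0<..})" if "y \<in> {0<..}" for y
    using that s by (auto intro!: derivative_eq_intros simp: field_simps)
  have inj: "inj_on (\<lambda>y. (y / s) powr q) {0<..}"
  proof (rule inj_onI)
    fix x y :: real
    assume "x \<in> {0<..}" "y \<in> {0<..}" "(x / s) powr q = (y / s) powr q"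
    then have "((x / s) powr q) powr (1/q) = ((y / s) powr q) powr (1/q)" "x / s > 0" "y / s > 0"
      using s by simp_all
    then show "x = y"
      using q s by (auto simp: powr_powr zero_less_divide_iff)
  qed
  have "\<bar>q / s * (y / s) powr (q - 1)\<bar> * F ((y / s) powr q)
          = q / s * (y / s) powr (q - 1) * F ((y / s) powr q)" for y
    using q s by simp
  then show ?thesis
    using has_absolute_integral_change_of_variables_1'[OF _ der inj, of F b]
      F image_scaled_powr_pos_reals[OF q s] by (simp add: borel_open)
qed

lemma Gamma_integral_real_pos:
  fixes x :: real
  assumes "x > 0"
  shows "(\<lambda>t. t powr (x - 1) / exp t) absolutely_integrable_on {0<..} \<and>
         integral {0<..} (\<lambda>t. t powr (x - 1) / exp t) = Gamma x"
proof -
  have "((\<lambda>t. t powr (x - 1) / exp t) has_integral Gamma x) {0<..}"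
    using Gamma_integral_real[OF assms]
    by (rule has_integral_spike_set_eq[THEN iffD1, rotated 2])
       (auto intro: negligible_subset[of "{0}"])
  then show ?thesis
    by (auto intro: nonnegative_absolutely_integrable_1 simp: has_integral_integrable integral_unique)
qed

lemma integral_exp_neg_powr:
  fixes q s :: real
  assumes q: "q > 0" and s: "s > 0"
  shows "(\<lambda>x. exp (- ((x / s) powr q))) absolutely_integrable_on {0<..} \<and>
         integral {0<..} (\<lambda>x. exp (- ((x / s) powr q))) = s * Gamma (1/q) / q"
proof -
  have "(\<lambda>t. s / q * (t powr (1/q - 1) / exp t)) absolutely_integrable_on {0<..} \<and>
        integral {0<..} (\<lambda>t. s / q * (t powr (1/q - 1) / exp t)) = s * Gamma (1/q) / q"
    using absolutely_integrable_integral_cmult[OF Gamma_integral_real_pos, of "1/q" "s / q"] q by simp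
  from absolutely_integrable_powr_substitution[OF q s this] show ?thesis
  proof (rule absolutely_integrable_integral_cong[THEN iffD1, rotated])
    fix y :: real
    assume "y \<in> {0<..}"
    then have y: "y > 0" and z: "y / s > 0"
      using s by simp_all
    have "(y / s) powr (q - 1) * ((y / s) powr q) powr (1/q - 1) = 1"
      using y z q s by (simp add: powr_powr powr_add[symmetric] algebra_simps)
    then show "q / s * (y / s) powr (q - 1) * (s / q * (((y / s) powr q) powr (1/q - 1) / exp ((y / s) powr q)))
               = exp (- ((y / s) powr q))"
      using q s by (simp add: exp_minus field_simps)
  qed
qed

lemma integral_powr_exp_neg_powr:
  fixes q :: real
  assumes q: "q > 0"
  shows "(\<lambda>x. x powr q * exp (- (x powr q))) absolutely_integrable_on {0<..} \<and>
         integral {0<..} (\<lambda>x. x powr q * exp (- (x powr q))) = Gamma (1/q) / q\<^sup>2"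
proof -
  have "Gamma (1/q + 1) = Gamma (1/q) / q"
    using q by (subst Gamma_plus1) (auto dest: nonpos_Ints_nonpos)
  moreover have G: "(\<lambda>t. t powr (1/q + 1 - 1) / exp t) absolutely_integrable_on {0<..} \<and>
           integral {0<..} (\<lambda>t. t powr (1/q + 1 - 1) / exp t) = Gamma (1/q + 1)"
    using Gamma_integral_real_pos[of "1/q + 1"] q by (simp add: add_pos_pos)
  ultimately have "(\<lambda>t. t powr (1/q + 1 - 1) / exp t / q) absolutely_integrable_on {0<..} \<and>
        integral {0<..} (\<lambda>t. t powr (1/q + 1 - 1) / exp t / q) = Gamma (1/q) / q\<^sup>2"
    using set_integrable_divide[OF conjunct1[OF G]] by (simp only: integral_divide) (simp add: power2_eq_square)
  from absolutely_integrable_powr_substitution[OF q zero_less_one this] show ?thesis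
  proof (rule absolutely_integrable_integral_cong[THEN iffD1, rotated])
    fix y :: real
    assume "y \<in> {0<..}"
    then have "y powr (q - 1) * (y powr q) powr (1/q) = y powr q"
      using q by (simp add: powr_powr powr_diff)
    then show "q / 1 * (y / 1) powr (q - 1) * (((y / 1) powr q) powr (1/q + 1 - 1) / exp ((y / 1) powr q) / q)
               = y powr q * exp (- (y powr q))"
      using q by (simp add: exp_minus field_simps)
  qed
qed

lemma integral_stretched_exponential_half:
  fixes q s :: real
  assumes q: "q > 0" and s: "s > 0"
  shows "(\<lambda>y. q / (2 * Gamma (1/q)) / s * exp (- ((y / s) powr q))) absolutely_integrable_on {0<..} \<and>
         integral {0<..} (\<lambda>y. q / (2 * Gamma (1/q)) / s * exp (- ((y / s) powr q))) = 1/2"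
proof -
  have "Gamma (1/q) \<noteq> 0"
    using q Gamma_real_pos[of "1/q"] by (simp add: less_imp_neq[symmetric])
  then have half: "q / (2 * Gamma (1/q)) / s * (s * Gamma (1/q) / q) = 1/2"
    using q s by simp
  show ?thesis
    using absolutely_integrable_integral_cmult[OF integral_exp_neg_powr[OF q s],
        of "q / (2 * Gamma (1/q)) / s", unfolded half] .
qed

lemma stretched_exponential_lborel_integrals:
  fixes q :: real
  assumes q: "q > 0"
  defines "a \<equiv> q / (2 * Gamma (1/q))"
  shows "integrable lborel (\<lambda>x. a * exp (- (\<bar>x\<bar> powr q))) \<and>
         (\<integral>x. a * exp (- (\<bar>x\<bar> powr q)) \<partial>lborel) = 1"
    and "integrable lborel (\<lambda>x. a * (\<bar>x\<bar> powr q * exp (- (\<bar>x\<bar> powr q)))) \<and>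
         (\<integral>x. a * (\<bar>x\<bar> powr q * exp (- (\<bar>x\<bar> powr q))) \<partial>lborel) = 1/q"
proof -
  have "(\<lambda>x. a / 1 * exp (- ((\<bar>x\<bar> / 1) powr q))) \<in> borel_measurable borel"
    by measurable
  from lborel_integral_even[OF integral_stretched_exponential_half[OF q zero_less_one] this[unfolded a_def]]
  show "integrable lborel (\<lambda>x. a * exp (- (\<bar>x\<bar> powr q))) \<and>
        (\<integral>x. a * exp (- (\<bar>x\<bar> powr q)) \<partial>lborel) = 1"
    unfolding a_def by (simp only: div_by_1 mult_2 field_sum_of_halves)
  have "Gamma (1/q) \<noteq> 0"
    using q Gamma_real_pos[of "1/q"] by (simp add: less_imp_neq[symmetric])
  then have "2 * (a * (Gamma (1/q) / q\<^sup>2)) = 1/q"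
    using q by (simp add: a_def power2_eq_square)
  then show "integrable lborel (\<lambda>x. a * (\<bar>x\<bar> powr q * exp (- (\<bar>x\<bar> powr q)))) \<and>
             (\<integral>x. a * (\<bar>x\<bar> powr q * exp (- (\<bar>x\<bar> powr q))) \<partial>lborel) = 1/q"
    using lborel_integral_even[OF absolutely_integrable_integral_cmult[OF
          integral_powr_exp_neg_powr[OF q], of a]] by simp
qed

section \<open>The constant of the moment-entropy inequality\<close>

lemma continuous_le_esssup_density:
  fixes f h :: "real \<Rightarrow> real"
  assumes f: "f \<in> borel_measurable borel" and I: "open I" "\<forall>x\<in>I. f x > 0"
    and h: "continuous_on I h" and u: "u \<in> I"
  shows "ereal (h u) \<le> esssup (density lborel f) (\<lambda>x. ereal (h x))"
proof (rule ccontr)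
  let ?E = "esssup (density lborel f) (\<lambda>x. ereal (h x))"
  assume "\<not> ereal (h u) \<le> ?E"
  then obtain r where r: "?E < ereal r" "r < h u"
    using ereal_dense2 not_le by (metis ereal_less_eq(3) less_ereal.simps(1) order_less_le_trans)
  have "AE x in density lborel f. ereal (h x) \<le> ?E"
    by (rule esssup_AE)
  then have "AE x in lborel. x \<in> I \<longrightarrow> ereal (h x) \<le> ?E"
    using f I(2) by (subst (asm) AE_density) (auto elim!: eventually_mono)
  then have "AE x in lborel. x \<in> I \<inter> h -` {r<..} \<longrightarrow> x \<in> {}"
  proof (rule eventually_mono)
    fix x
    assume hx: "x \<in> I \<longrightarrow> ereal (h x) \<le> ?E"
    show "x \<in> I \<inter> h -` {r<..} \<longrightarrow> x \<in> {}"
    proof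
      assume x: "x \<in> I \<inter> h -` {r<..}"
      with hx r(1) have "ereal (h x) < ereal r"
        by (meson IntD1 le_less_trans)
      with x show "x \<in> {}"
        by simp
    qed
  qed
  then have ae: "AE x \<in> I \<inter> h -` {r<..} in lebesgue. x \<in> {}"
    by (rule AE_completion)
  have "u \<in> I \<inter> h -` {r<..}"
    using u r(2) by simp
  from mem_closed_if_AE_lebesgue_open[OF continuous_open_preimage[OF h I(1) open_greaterThan]
      closed_empty ae this] show False
    by simp
qed

lemma K0_gt1:
  fixes p :: real
  assumes p: "p > 1"
  defines "q \<equiv> p / (p - 1)"
  defines "a \<equiv> q / (2 * Gamma (1/q))"
  shows "K0 p = a * q powr (-1/q) * exp (-1/q)"
proof -
  have q: "q > 0"
    using p by (simp add: q_def)
  then have a: "a > 0"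
    by (simp add: a_def Gamma_real_pos)
  note mass = stretched_exponential_lborel_integrals(1)[OF q, folded a_def]
  note moment = stretched_exponential_lborel_integrals(2)[OF q, folded a_def]
  have g: "g_p1 p = (\<lambda>x. a * exp (- (\<bar>x\<bar> powr q)))"
    using p by (simp add: g_p1_def q_def a_def fun_eq_iff)
  have sigma: "sigma_mom (pconj p) (g_p1 p) = (1/q) powr (1/q)"
    using moment p by (simp add: sigma_mom_def pconj_def q_def[symmetric] g ac_simps)
  have entropy: "shannon (g_p1 p) = 1/q - ln a"
  proof -
    have "a * exp (- (\<bar>x\<bar> powr q)) * ln (a * exp (- (\<bar>x\<bar> powr q)))
          = ln a * (a * exp (- (\<bar>x\<bar> powr q))) - a * (\<bar>x\<bar> powr q * exp (- (\<bar>x\<bar> powr q)))" for x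
      using a by (simp add: ln_mult algebra_simps)
    then show ?thesis
      using mass moment by (simp add: shannon_def g)
  qed
  have "q powr (-1/q) = (1/q) powr (1/q)" "exp (-1/q) = 1 / exp (1/q)"
    using q by (simp_all add: powr_divide powr_minus_divide exp_minus field_simps)
  then show ?thesis
    using a by (simp add: K0_def sigma entropy exp_diff)
qed

lemma K0_1: "K0 1 = 1/2"
proof -
  define g :: "real \<Rightarrow> real" where "g x = (if \<bar>x\<bar> < 1 then 1/2 else 0)" for x
  have g: "g_p1 1 = g"
    by (simp add: g_def g_p1_def fun_eq_iff)
  have meas: "g \<in> borel_measurable borel"
    unfolding g_def by measurable
  have sigma: "esssup (density lborel g) (\<lambda>x. ereal \<bar>x\<bar>) = 1"
  proof (rule antisym)
    show "esssup (density lborel g) (\<lambda>x. ereal \<bar>x\<bar>) \<le> 1"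
      using meas by (intro esssup_I) (auto simp: AE_density g_def)
    have bound: "ereal \<bar>t\<bar> \<le> esssup (density lborel g) (\<lambda>x. ereal \<bar>x\<bar>)"
      if "t \<in> {-1<..<1}" for t
      using that by (intro continuous_le_esssup_density[OF meas]) (auto simp: g_def intro: continuous_intros)
    show "1 \<le> esssup (density lborel g) (\<lambda>x. ereal \<bar>x\<bar>)"
    proof (rule dense_le_bounded[of 0])
      fix w :: ereal
      assume "0 < w" "w < 1"
      then obtain t where "w = ereal t" "t \<in> {-1<..<1}" "t > 0"
        by (cases w) auto
      with bound show "w \<le> esssup (density lborel g) (\<lambda>x. ereal \<bar>x\<bar>)"
        by force
    qed simp
  qed
  have entropy: "shannon g = ln 2"
  proof -
    have "(\<lambda>x. g x * ln (g x)) = (\<lambda>x. (1/2 * ln (1/2)) * indicator {-1<..<1} x)"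
      by (auto simp: fun_eq_iff g_def indicator_def abs_less_iff)
    then show ?thesis
      by (simp add: shannon_def measure_lborel_Ioo ln_div)
  qed
  show ?thesis
    by (simp add: K0_def g sigma_mom_def pconj_def sigma entropy)
qed

section \<open>Entropy versus mean log-derivative of a decreasing density\<close>

lemma strict_antimono_if_deriv_neg:
  fixes f f' :: "real \<Rightarrow> real"
  assumes I: "is_interval I"
    and deriv: "\<forall>x\<in>I. (f has_real_derivative f' x) (at x)"
    and neg: "\<forall>x\<in>I. f' x < 0"
    and uv: "u \<in> I" "v \<in> I" "u < v"
  shows "f v < f u"
proof (rule DERIV_neg_imp_decreasing[OF uv(3)])
  fix x
  assume "u \<le> x" "x \<le> v"
  then have "x \<in> I"
    using I uv unfolding is_interval_1 by blast
  then show "\<exists>y. (f has_real_derivative y) (at x) \<and> y < 0"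
    using deriv neg by blast
qed

lemma inj_on_powr_if_deriv_neg:
  fixes f f' :: "real \<Rightarrow> real" and \<beta> :: real
  assumes I: "is_interval I"
    and pos: "\<forall>x\<in>I. f x > 0"
    and deriv: "\<forall>x\<in>I. (f has_real_derivative f' x) (at x)"
    and neg: "\<forall>x\<in>I. f' x < 0"
    and \<beta>: "\<beta> \<noteq> 0"
  shows "inj_on (\<lambda>x. f x powr \<beta>) I"
proof (rule inj_onI)
  fix x y
  assume xy: "x \<in> I" "y \<in> I" "f x powr \<beta> = f y powr \<beta>"
  then have "(f x powr \<beta>) powr (1 / \<beta>) = (f y powr \<beta>) powr (1 / \<beta>)"
    by simp
  moreover have "f x > 0" "f y > 0"
    using xy(1,2) pos by auto
  ultimately have "f x = f y"
    using \<beta> by (simp add: powr_powr)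
  then show "x = y"
    using strict_antimono_if_deriv_neg[OF I deriv neg] xy(1,2) by (metis less_irrefl linorder_neqE)
qed

lemma ln_le_minus_one_weighted:
  fixes y d \<gamma> \<alpha> :: real
  assumes y: "y > 0" and d: "d > 0" and \<gamma>: "\<gamma> > 0"
  shows "y * ln \<gamma> + ln d * y - \<alpha> * (y * ln y) \<le> y powr (1 - \<alpha>) * d * \<gamma> - y"
proof -
  define t where "t = \<gamma> * d * y powr (- \<alpha>)"
  have "y * ln t \<le> y * (t - 1)"
    using y d \<gamma> by (intro mult_left_mono ln_le_minus_one) (simp_all add: t_def)
  moreover have "ln t = ln \<gamma> + ln d - \<alpha> * ln y"
    using y d \<gamma> by (simp add: t_def ln_mult ln_powr)
  moreover have "y * t = y powr (1 - \<alpha>) * d * \<gamma>"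
    using y by (simp add: t_def powr_diff powr_minus field_simps)
  ultimately show ?thesis
    by (simp add: algebra_simps)
qed

lemma entropy_log_derivative_bound:
  fixes \<alpha> S D L :: real and f f' G :: "real \<Rightarrow> real" and I T :: "real set"
  assumes \<alpha>: "\<alpha> \<noteq> 2"
    and I: "is_interval I" "open I"
    and pos: "\<forall>x\<in>I. f x > 0"
    and deriv: "\<forall>x\<in>I. (f has_real_derivative f' x) (at x)"
    and decr: "\<forall>x\<in>I. f' x < 0"
    and G: "\<And>y. y > 0 \<Longrightarrow> G y > 0" "G absolutely_integrable_on T" "\<forall>y\<in>T. 0 \<le> G y"
    and T: "(\<lambda>x. f x powr (2 - \<alpha>) / \<bar>2 - \<alpha>\<bar>) ` I \<subseteq> T"
    and mass: "(f has_integral 1) I"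
    and entropy: "((\<lambda>x. f x * ln (f x)) has_integral - S) I"
    and log_deriv: "((\<lambda>x. ln \<bar>f' x\<bar> * f x) has_integral D) I"
    and L: "((\<lambda>x. f x * ln (G (f x powr (2 - \<alpha>) / \<bar>2 - \<alpha>\<bar>))) has_integral L) I"
  shows "L + D + \<alpha> * S \<le> integral T G - 1"
proof -
  define X where "X x = f x powr (2 - \<alpha>) / \<bar>2 - \<alpha>\<bar>" for x
  define X' where "X' x = (2 - \<alpha>) * f x powr (1 - \<alpha>) * f' x / \<bar>2 - \<alpha>\<bar>" for x
  have X': "(X has_real_derivative X' x) (at x within I)" if "x \<in> I" for x
  proof -
    have "f x > 0" "(f has_real_derivative f' x) (at x within I)"
      using pos deriv that by (auto intro: has_field_derivative_at_within)
    from DERIV_cdivide[OF DERIV_chain2[OF has_real_derivative_powr[OF this(1), of "2 - \<alpha>"] this(2)],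
        of "\<bar>2 - \<alpha>\<bar>"]
    show ?thesis
      unfolding X_def X'_def by (simp add: diff_diff_eq[symmetric])
  qed
  have "inj_on (\<lambda>x. f x powr (2 - \<alpha>)) I"
    using inj_on_powr_if_deriv_neg[OF I(1) pos deriv decr] \<alpha> by simp
  then have "inj_on X I"
    using \<alpha> by (simp add: inj_on_def X_def)
  then have subst: "((\<lambda>x. \<bar>X' x\<bar> * G (X x)) has_integral integral (X ` I) G) I \<and>
                    integral (X ` I) G \<le> integral T G"
    using has_integral_change_of_variables_le[OF _ X' _ G(2,3)] T I(2)
    by (simp add: X_def[abs_def] borel_open)
  have "f x * ln (G (X x)) + ln \<bar>f' x\<bar> * f x - \<alpha> * (f x * ln (f x)) \<le> \<bar>X' x\<bar> * G (X x) - f x"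
    if x: "x \<in> I" for x
  proof -
    have "f x > 0" "\<bar>f' x\<bar> > 0" "G (X x) > 0"
      using pos decr G(1) x \<alpha> by (auto simp: X_def)
    moreover have "\<bar>X' x\<bar> = f x powr (1 - \<alpha>) * \<bar>f' x\<bar>"
      using \<alpha> by (simp add: X'_def abs_mult)
    ultimately show ?thesis
      using ln_le_minus_one_weighted by (simp add: mult.commute)
  qed
  then have "L + D - \<alpha> * - S \<le> integral (X ` I) G - 1"
    using has_integral_le[OF has_integral_diff[OF has_integral_add[OF L[folded X_def] log_deriv]
          has_integral_mult_right[OF entropy]]
        has_integral_diff[OF conjunct1[OF subst] mass]] by blast
  then show ?thesis
    using subst by simp
qed

lemma entropy_log_derivative_bound_stretched_exp:
  fixes \<alpha> q s S D M :: real and f f' :: "real \<Rightarrow> real" and I :: "real set"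
  assumes \<alpha>: "\<alpha> \<noteq> 2"
    and I: "is_interval I" "open I"
    and pos: "\<forall>x\<in>I. f x > 0"
    and deriv: "\<forall>x\<in>I. (f has_real_derivative f' x) (at x)"
    and decr: "\<forall>x\<in>I. f' x < 0"
    and q: "q > 0" and s: "s > 0"
    and mass: "(f has_integral 1) I"
    and entropy: "((\<lambda>x. f x * ln (f x)) has_integral - S) I"
    and log_deriv: "((\<lambda>x. ln \<bar>f' x\<bar> * f x) has_integral D) I"
    and moment: "((\<lambda>x. f x powr (1 + (2 - \<alpha>) * q)) has_integral M) I"
  shows "ln (q / (2 * Gamma (1/q)) / s) - M / (\<bar>2 - \<alpha>\<bar> * s) powr q + D + \<alpha> * S \<le> - 1/2"
proof -
  define a where "a = q / (2 * Gamma (1/q))"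
  define c where "c = \<bar>2 - \<alpha>\<bar>"
  define G where "G y = a / s * exp (- ((y / s) powr q))" for y
  have a: "a > 0"
    using q by (simp add: a_def Gamma_real_pos)
  have G: "G absolutely_integrable_on {0<..} \<and> integral {0<..} G = 1/2"
    unfolding G_def[abs_def] a_def by (rule integral_stretched_exponential_half[OF q s])
  have c: "c > 0"
    using \<alpha> by (simp add: c_def)
  have integral: "((\<lambda>x. ln (a / s) * f x - f x powr (1 + (2 - \<alpha>) * q) / (c * s) powr q) has_integral
         ln (a / s) * 1 - M / (c * s) powr q) I"
    by (intro has_integral_diff has_integral_mult_right has_integral_divide mass moment)
  have pointwise: "ln (a / s) * f x - f x powr (1 + (2 - \<alpha>) * q) / (c * s) powr q
                 = f x * ln (G (f x powr (2 - \<alpha>) / c))" if "x \<in> I" for x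
  proof -
    have fx: "f x > 0"
      using pos that by blast
    have "ln (G y) = ln (a / s) - (y / s) powr q" for y
      unfolding G_def using a s by (subst ln_mult) simp_all
    moreover have "((f x powr (2 - \<alpha>) / c) / s) powr q = f x powr ((2 - \<alpha>) * q) / (c * s) powr q"
      using fx c s by (simp add: powr_divide powr_powr)
    moreover have "f x * f x powr ((2 - \<alpha>) * q) = f x powr (1 + (2 - \<alpha>) * q)"
      using fx by (simp add: powr_add)
    ultimately show ?thesis
      by (simp add: right_diff_distrib mult.commute)
  qed
  have L: "((\<lambda>x. f x * ln (G (f x powr (2 - \<alpha>) / c))) has_integral
             ln (a / s) - M / (c * s) powr q) I"
    using has_integral_eq[OF pointwise integral] by simp
  have "f x powr (2 - \<alpha>) / c > 0" if "x \<in> I" for x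
    using pos that c by (simp add: less_imp_neq[symmetric])
  then have "(\<lambda>x. f x powr (2 - \<alpha>) / c) ` I \<subseteq> {0<..}"
    by auto
  moreover have "G y > 0" for y
    using a s by (simp add: G_def)
  ultimately have "ln (a / s) - M / (c * s) powr q + D + \<alpha> * S \<le> integral {0<..} G - 1"
    using entropy_log_derivative_bound[OF \<alpha> I pos deriv decr _ conjunct1[OF G] _ _
        mass entropy log_deriv L[unfolded c_def]]
    by (simp add: c_def less_imp_le)
  then show ?thesis
    using G by (simp add: a_def c_def)
qed

lemma optimal_scale_bound:
  fixes a c q M E :: real
  assumes a: "a > 0" and c: "c > 0" and q: "q > 0" and M: "M \<ge> 0"
    and bound: "\<And>s. s > 0 \<Longrightarrow> ln (a / s) - M / (c * s) powr q + E \<le> - 1/2"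
  shows "c * a * q powr (-1/q) * exp (-1/q) * exp E < M powr (1/q)"
proof -
  have "M \<noteq> 0"
  proof
    assume "M = 0"
    then show False
      using bound[of "a * exp E"] a by (simp add: ln_div)
  qed
  with M have M: "M > 0"
    by simp
  \<comment> \<open>the minimiser of \<open>ln s + M / (c s)\<^sup>q\<close>\<close>
  define s where "s = (q * M) powr (1/q) / c"
  have s: "s > 0"
    using q M c by (simp add: s_def)
  have "(c * s) powr q = q * M"
    using q M c by (simp add: s_def powr_powr)
  moreover have "ln (a / s) = ln a + ln c - (ln q + ln M) / q"
    using a c q M by (simp add: s_def ln_div ln_mult ln_powr)
  ultimately have "ln a + ln c - ln q / q - 1/q + E < ln M / q"
    using bound[OF s] q M by (simp add: diff_divide_distrib add_divide_distrib)
  then have "ln (c * a * q powr (-1/q) * exp (-1/q) * exp E) < ln M / q"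
    using a c q by (simp add: ln_mult ln_powr)
  from exp_less_mono[OF this]
  have "c * a * q powr (-1/q) * exp (-1/q) * exp E < exp (ln M / q)"
    using a c q by simp
  then show ?thesis
    using M by (simp add: powr_def)
qed

lemma entropy_log_derivative_moment_bound:
  fixes \<alpha> p S D M :: real and f f' :: "real \<Rightarrow> real" and I :: "real set"
  assumes \<alpha>: "\<alpha> \<noteq> 2" and p: "p > 1"
    and I: "is_interval I" "open I"
    and pos: "\<forall>x\<in>I. f x > 0"
    and deriv: "\<forall>x\<in>I. (f has_real_derivative f' x) (at x)"
    and decr: "\<forall>x\<in>I. f' x < 0"
    and mass: "(f has_integral 1) I"
    and entropy: "((\<lambda>x. f x * ln (f x)) has_integral - S) I"
    and log_deriv: "((\<lambda>x. ln \<bar>f' x\<bar> * f x) has_integral D) I"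
    and moment: "((\<lambda>x. f x powr (1 + (2 - \<alpha>) * (p / (p - 1)))) has_integral M) I" "M \<ge> 0"
  shows "\<bar>2 - \<alpha>\<bar> * K0 p * exp D < M powr ((p - 1) / p) * exp (- \<alpha> * S)"
proof -
  define q where "q = p / (p - 1)"
  have q: "q > 0"
    using p by (simp add: q_def)
  have "\<bar>2 - \<alpha>\<bar> * (q / (2 * Gamma (1/q))) * q powr (-1/q) * exp (-1/q) * exp (D + \<alpha> * S)
          < M powr (1/q)"
  proof (rule optimal_scale_bound)
    show "q / (2 * Gamma (1/q)) > 0"
      using q by (simp add: Gamma_real_pos)
    show "ln (q / (2 * Gamma (1/q)) / s) - M / (\<bar>2 - \<alpha>\<bar> * s) powr q + (D + \<alpha> * S) \<le> - 1/2"
      if "s > 0" for s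
      using entropy_log_derivative_bound_stretched_exp[OF \<alpha> I pos deriv decr q that mass entropy log_deriv
          moment(1)[folded q_def]] by simp
  qed (use \<alpha> q moment(2) in auto)
  moreover have "1 / q = (p - 1) / p"
    using p by (simp add: q_def)
  ultimately show ?thesis
    using K0_gt1[OF p] by (simp add: q_def[symmetric] exp_add exp_minus field_simps mult.assoc)
qed

lemma entropy_log_derivative_sup_bound:
  fixes \<alpha> S D N :: real and f f' :: "real \<Rightarrow> real" and I :: "real set"
  assumes \<alpha>: "\<alpha> \<noteq> 2"
    and I: "is_interval I" "open I" "I \<noteq> {}"
    and pos: "\<forall>x\<in>I. f x > 0"
    and deriv: "\<forall>x\<in>I. (f has_real_derivative f' x) (at x)"
    and decr: "\<forall>x\<in>I. f' x < 0"
    and mass: "(f has_integral 1) I"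
    and entropy: "((\<lambda>x. f x * ln (f x)) has_integral - S) I"
    and log_deriv: "((\<lambda>x. ln \<bar>f' x\<bar> * f x) has_integral D) I"
    and N: "\<forall>x\<in>I. f x powr (2 - \<alpha>) \<le> N"
  shows "\<bar>2 - \<alpha>\<bar> * K0 1 * exp D < N * exp (- \<alpha> * S)"
proof -
  define c where "c = \<bar>2 - \<alpha>\<bar>"
  define m where "m = N / c"
  have c: "c > 0"
    using \<alpha> by (simp add: c_def)
  obtain x where x: "x \<in> I"
    using I(3) by blast
  then have "0 < f x powr (2 - \<alpha>)"
    using pos by (simp add: less_imp_neq[symmetric])
  with N x have "N > 0"
    by (meson less_le_trans)
  then have m: "m > 0"
    using c by (simp add: m_def)
  have "(\<lambda>x. f x powr (2 - \<alpha>) / c) ` I \<subseteq> {0..m}"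
    using N c by (auto simp: m_def divide_right_mono)
  then have "ln (1/m) * 1 + D + \<alpha> * S \<le> integral {0..m} (\<lambda>_. 1/m) - 1"
    using entropy_log_derivative_bound[OF \<alpha> I(1,2) pos deriv decr, of "\<lambda>_. 1/m" "{0..m}"]
      m mass entropy log_deriv has_integral_mult_left[OF mass, of "ln (1/m)"]
    by (simp add: c_def)
  then have "D + \<alpha> * S \<le> ln m"
    using m by (simp add: ln_div)
  then have "exp (D + \<alpha> * S) \<le> m"
    using m exp_le_cancel_iff[of "D + \<alpha> * S" "ln m"] by simp
  then have "c * exp D \<le> N * exp (- \<alpha> * S)"
    using c by (simp add: m_def exp_add exp_minus field_simps)
  moreover have "N * exp (- \<alpha> * S) > 0"
    using \<open>N > 0\<close> by simp
  ultimately show ?thesis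
    by (simp add: K0_1 c_def)
qed

section \<open>Renyi entropy powers\<close>

lemma renyiN_pconj1_bound:
  fixes \<alpha> :: real and f :: "real \<Rightarrow> real" and I :: "real set"
  assumes \<alpha>: "\<alpha> \<noteq> 2" and I: "open I" and pos: "\<forall>x\<in>I. f x > 0"
    and cont: "continuous_on I f" and meas: "f \<in> borel_measurable borel"
    and fin_Npos: "\<alpha> < 2 \<Longrightarrow> esssup (density lborel f) (\<lambda>x. ereal (f x)) < \<infinity>"
    and fin_Nneg: "\<alpha> > 2 \<Longrightarrow> esssup (density lborel f) (\<lambda>x. ereal (1 / f x)) < \<infinity>"
    and x: "x \<in> I"
  shows "f x powr (2 - \<alpha>) \<le> renyiN (1 + ereal (2 - \<alpha>) * pconj 1) f powr (\<alpha> - 2)"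
proof (cases "\<alpha> < 2")
  case True
  let ?E = "esssup (density lborel f) (\<lambda>x. ereal (f x))"
  have pc: "1 + ereal (2 - \<alpha>) * pconj 1 = \<infinity>"
    using True by (simp add: pconj_def)
  have "ereal (f x) \<le> ?E"
    by (rule continuous_le_esssup_density[OF meas I pos cont x])
  with fin_Npos[OF True] obtain e where e: "?E = ereal e" "f x \<le> e"
    by (cases ?E) auto
  moreover have "f x > 0"
    using pos x by blast
  ultimately have "f x powr (2 - \<alpha>) \<le> e powr (2 - \<alpha>)" "e > 0"
    using True by (auto intro: powr_mono2)
  moreover have "renyiN (1 + ereal (2 - \<alpha>) * pconj 1) f = 1 / e"
    unfolding renyiN_def pc using e by simp
  ultimately show ?thesis
    by (simp add: powr_divide powr_minus_divide[symmetric])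
next
  case False
  then have "\<alpha> > 2"
    using \<alpha> by simp
  let ?E = "esssup (density lborel f) (\<lambda>x. ereal (1 / f x))"
  have pc: "1 + ereal (2 - \<alpha>) * pconj 1 = - \<infinity>"
    using \<open>\<alpha> > 2\<close> by (simp add: pconj_def)
  have "continuous_on I (\<lambda>x. 1 / f x)"
    using cont pos by (intro continuous_intros) auto
  then have "ereal (1 / f x) \<le> ?E"
    by (rule continuous_le_esssup_density[OF meas I pos _ x])
  with fin_Nneg[OF \<open>\<alpha> > 2\<close>] obtain r where r: "?E = ereal r" "1 / f x \<le> r"
    by (cases ?E) auto
  moreover have "f x > 0"
    using pos x by blast
  ultimately have "(1 / f x) powr (\<alpha> - 2) \<le> r powr (\<alpha> - 2)"
    using \<open>\<alpha> > 2\<close> by (intro powr_mono2) auto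
  moreover have "renyiN (1 + ereal (2 - \<alpha>) * pconj 1) f = r"
    unfolding renyiN_def pc using r by simp
  ultimately show ?thesis
    using \<open>f x > 0\<close> by (simp add: powr_divide powr_minus_divide[symmetric])
qed

lemma renyiN_powr_pconj_gt1:
  fixes \<alpha> p :: real and f :: "real \<Rightarrow> real"
  assumes \<alpha>: "\<alpha> \<noteq> 2" and p: "p > 1"
  shows "renyiN (1 + ereal (2 - \<alpha>) * pconj p) f powr (\<alpha> - 2)
           = (\<integral>x. f x powr (1 + (2 - \<alpha>) * (p / (p - 1))) \<partial>lborel) powr ((p - 1) / p)"
proof -
  have pc: "1 + ereal (2 - \<alpha>) * pconj p = ereal (1 + (2 - \<alpha>) * (p / (p - 1)))"
    using p by (simp add: pconj_def)
  have "1 / (1 - (1 + (2 - \<alpha>) * (p / (p - 1)))) * (\<alpha> - 2) = (p - 1) / p"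
    using \<alpha> p by (simp add: field_simps)
  then show ?thesis
    unfolding renyiN_def pc by (simp del: ereal_plus_1 add: powr_powr)
qed

theorem proposition12:
  fixes \<alpha> p :: real and f f' :: "real \<Rightarrow> real" and I :: "real set"
  assumes alpha: "\<alpha> \<noteq> 2" and p: "p \<ge> 1"
    and I: "is_interval I" "open I" "I \<noteq> {}"
    and supp: "\<forall>x\<in>I. f x > 0" "\<forall>x. x \<notin> I \<longrightarrow> f x = 0"
    and deriv: "\<forall>x\<in>I. (f has_real_derivative f' x) (at x)"
    and decr: "\<forall>x\<in>I. f' x < 0"
    and dens: "integrable lborel f" "(\<integral>x. f x \<partial>lborel) = 1"
    and fin_S: "integrable lborel (\<lambda>x. f x * ln (f x))"
    and fin_D: "integrable lborel (\<lambda>x. ln \<bar>f' x\<bar> * f x)"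
    and fin_N: "p > 1 \<Longrightarrow> integrable lborel (\<lambda>x. f x powr (1 + (2 - \<alpha>) * (p / (p - 1))))"
    and fin_Npos: "p = 1 \<Longrightarrow> \<alpha> < 2 \<Longrightarrow> esssup (density lborel f) (\<lambda>x. ereal (f x)) < \<infinity>"
    and fin_Nneg: "p = 1 \<Longrightarrow> \<alpha> > 2 \<Longrightarrow> esssup (density lborel f) (\<lambda>x. ereal (1 / f x)) < \<infinity>"
  shows "(renyiN (1 + ereal (2 - \<alpha>) * pconj p) f powr (\<alpha> - 2) * exp (- \<alpha> * shannon f)
           \<ge> \<bar>2 - \<alpha>\<bar> * K0 p * exp (fmean (\<lambda>x. ln \<bar>f' x\<bar>) f)) \<and>
         (renyiN (1 + ereal (2 - \<alpha>) * pconj p) f powr (\<alpha> - 2) * exp (- \<alpha> * shannon f)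
           = \<bar>2 - \<alpha>\<bar> * K0 p * exp (fmean (\<lambda>x. ln \<bar>f' x\<bar>) f)
         \<longrightarrow> up_transform_eq \<alpha> (g_p1 p) f)"
proof -
  have mass: "(f has_integral 1) I"
    using has_integral_lborel_on_support[OF dens(1)] supp(2) dens(2) by simp
  have entropy: "((\<lambda>x. f x * ln (f x)) has_integral - shannon f) I"
    using has_integral_lborel_on_support[OF fin_S] supp(2) by (simp add: shannon_def)
  have log_deriv: "((\<lambda>x. ln \<bar>f' x\<bar> * f x) has_integral fmean (\<lambda>x. ln \<bar>f' x\<bar>) f) I"
    using has_integral_lborel_on_support[OF fin_D] supp(2) by (simp add: fmean_def)
  have "\<bar>2 - \<alpha>\<bar> * K0 p * exp (fmean (\<lambda>x. ln \<bar>f' x\<bar>) f)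
          < renyiN (1 + ereal (2 - \<alpha>) * pconj p) f powr (\<alpha> - 2) * exp (- \<alpha> * shannon f)"
  proof (cases "p = 1")
    case True
    have "continuous_on I f"
      using deriv by (blast intro: continuous_at_imp_continuous_on DERIV_isCont)
    moreover have "f \<in> borel_measurable borel"
      using dens(1) by auto
    ultimately show ?thesis
      using entropy_log_derivative_sup_bound[OF alpha I supp(1) deriv decr mass entropy log_deriv]
        renyiN_pconj1_bound[OF alpha I(2) supp(1)] fin_Npos fin_Nneg True by blast
  next
    case False
    then have "p > 1"
      using p by simp
    with entropy_log_derivative_moment_bound[OF alpha this I(1,2) supp(1) deriv decr mass entropy log_deriv
        has_integral_lborel_on_support[OF fin_N]] supp(2)
    show ?thesis
      by (simp add: renyiN_powr_pconj_gt1[OF alpha] integral_nonneg)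
  qed
  then show ?thesis
    by simp
qed

end
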